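(* Let $P$ be a finite set of points in the plane, let $t>1$, $t'\ge t$, and let $k$ be any positive integer. If $h$ is set to the diameter (maximum hop distance) of the dual graph $G_T$ of the quad-tree $T$ built on $P$ with leaf capacity $k$, then the graph $H$ output by \textsc{Fast-Sparse-Spanner}$(P,t,t',k,h)$ is a $t$-spanner of $P$, i.e., for every pair of points $p,q\in P$ the shortest-path distance between $p$ and $q$ in $H$ is at most $t|pq|$.
   Context: All graphs are Euclidean: an edge $\{u,v\}$ has weight $|uv|$. A $t$-path for $u,v$ in $H$ is a path between $u,v$ of length at most $t|uv|$. Region quad-tree with leaf capacity $k$: the root corresponds to the bounding box of $P$; any node whose square contains more than $k$ points of $P$ is split into four equal quadrants (four children), recursively; nodes with at most $k$ points are leaves. The dual graph $G_T$ has the leaves of $T$ as vertices, two leaves adjacent iff their squares intersect. \textsc{Fast-Sparse-Spanner}$(P,t,t',k,h)$: (1) Build $T$ on $P$ with leaf capacity $k$; $H$ empty on $P$. (2) For every non-empty leaf $\sigma$, add to $H$ the edges of the greedy $t$-spanner on $P\cap\sigma$ (sort pairs of $P\cap\sigma$ by distance; add $\{p,q\}$ if the current shortest-path distance exceeds $t|pq|$); leader $\ell_\sigma$ = a point of $P\cap\sigma$ closest to the center of the bounding box of $P\cap\sigma$. (3) Add to $H$ the edges of a WSPD $t'$-spanner on the leaders (one edge per pair of a well-separated pair decomposition with separation ratio $4(t'+1)/(t'-1)$). (4) For each pair of adjacent non-empty leaves in $G_T$ not yet merged, merge them. (5) For $i=2,\dots,h$, for each non-empty leaf $\sigma$ and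 each non-empty leaf $\sigma'$ at exactly $i$ hops from $\sigma$ in $G_T$, merge them if not yet merged. Merging $\sigma_i,\sigma_j$ with point sets $P_i,P_j$: process all pairs $(u,v)\in P_i\times P_j$ in some order, maintaining a set of bridges (paths in $H$ between a point of $P_i$ and a point of $P_j$); for each pair: skip it if some bridge $x\leadsto y$ satisfies $t|ux|+|x\leadsto y|+t|yv|\le t|uv|$; otherwise look for a $t$-path from $u$ to $v$ in $H$ (by a greedy walk and then an exact shortest path computation via $A^*$); if one is found store it as a bridge, else add the edge $\{u,v\}$ to $H$ and to the bridges. *)

theory Defs
  imports "HOL-Analysis.Analysis"
begin

type_synonym pt = "real \<times> real"
type_synonym graph = "pt set set"   (* undirected edges {u,v}; weight = dist u v *)

definition is_path :: "graph \<Rightarrow> pt list \<Rightarrow> pt \<Rightarrow> pt \<Rightarrow> bool" where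
  "is_path E ps u v \<longleftrightarrow> ps \<noteq> [] \<and> hd ps = u \<and> last ps = v \<and>
     (\<forall>i < length ps - 1. {ps ! i, ps ! Suc i} \<in> E)"

definition path_len :: "pt list \<Rightarrow> real" where
  "path_len ps = (\<Sum>i < length ps - 1. dist (ps ! i) (ps ! Suc i))"

definition is_tpath :: "graph \<Rightarrow> real \<Rightarrow> pt list \<Rightarrow> pt \<Rightarrow> pt \<Rightarrow> bool" where
  "is_tpath E t ps u v \<longleftrightarrow> is_path E ps u v \<and> path_len ps \<le> t * dist u v"

definition has_tpath :: "graph \<Rightarrow> real \<Rightarrow> pt \<Rightarrow> pt \<Rightarrow> bool" where
  "has_tpath E t u v \<longleftrightarrow> (\<exists>ps. is_tpath E t ps u v)"

definition t_spanner :: "pt set \<Rightarrow> real \<Rightarrow> graph \<Rightarrow> bool" where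
  "t_spanner P t E \<longleftrightarrow> (\<forall>p\<in>P. \<forall>q\<in>P. has_tpath E t p q)"

definition greedy_step :: "real \<Rightarrow> graph \<Rightarrow> pt \<times> pt \<Rightarrow> graph" where
  "greedy_step t E pq =
     (if has_tpath E t (fst pq) (snd pq) then E else insert {fst pq, snd pq} E)"

definition greedy_spanner :: "pt set \<Rightarrow> real \<Rightarrow> graph \<Rightarrow> bool" where
  "greedy_spanner S t G \<longleftrightarrow>
     (\<exists>ps. distinct (map (\<lambda>(p,q). {p,q}) ps) \<and>
        set (map (\<lambda>(p,q). {p,q}) ps) = {{p,q} | p q. p \<in> S \<and> q \<in> S \<and> p \<noteq> q} \<and>
        (\<forall>(p,q) \<in> set ps. p \<noteq> q) \<and>
        sorted (map (\<lambda>(p,q). dist p q) ps) \<and>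
        G = foldl (greedy_step t) {} ps)"

definition root_x :: "pt set \<Rightarrow> real" where "root_x P = Min (fst ` P)"
definition root_y :: "pt set \<Rightarrow> real" where "root_y P = Min (snd ` P)"
definition root_side :: "pt set \<Rightarrow> real" where
  "root_side P = max (Max (fst ` P) - Min (fst ` P)) (Max (snd ` P) - Min (snd ` P))"

text \<open>Node (d,i,j): the square at depth d with column i and row j (closed square).\<close>
definition qsq :: "pt set \<Rightarrow> nat \<times> nat \<times> nat \<Rightarrow> pt set" where
  "qsq P = (\<lambda>(d,i,j). {(x,y).
      root_x P + real i * root_side P / 2^d \<le> x \<and> x \<le> root_x P + real (i+1) * root_side P / 2^d \<and>
      root_y P + real j * root_side P / 2^d \<le> y \<and> y \<le> root_y P + real (j+1) * root_side P / 2^d})"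

definition qt_node :: "pt set \<Rightarrow> nat \<Rightarrow> nat \<times> nat \<times> nat \<Rightarrow> bool" where
  "qt_node P k = (\<lambda>(d,i,j). i < 2^d \<and> j < 2^d \<and>
      (\<forall>d' < d. k < card (P \<inter> qsq P (d', i div 2^(d-d'), j div 2^(d-d')))))"

definition qt_leaf :: "pt set \<Rightarrow> nat \<Rightarrow> nat \<times> nat \<times> nat \<Rightarrow> bool" where
  "qt_leaf P k n \<longleftrightarrow> qt_node P k n \<and> card (P \<inter> qsq P n) \<le> k"

definition ne_leaf :: "pt set \<Rightarrow> nat \<Rightarrow> nat \<times> nat \<times> nat \<Rightarrow> bool" where
  "ne_leaf P k n \<longleftrightarrow> qt_leaf P k n \<and> P \<inter> qsq P n \<noteq> {}"

definition qt_adj :: "pt set \<Rightarrow> nat \<Rightarrow> nat \<times> nat \<times> nat \<Rightarrow> nat \<times> nat \<times> nat \<Rightarrow> bool" where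
  "qt_adj P k a b \<longleftrightarrow> qt_leaf P k a \<and> qt_leaf P k b \<and> a \<noteq> b \<and> qsq P a \<inter> qsq P b \<noteq> {}"

definition qt_hop :: "pt set \<Rightarrow> nat \<Rightarrow> nat \<times> nat \<times> nat \<Rightarrow> nat \<times> nat \<times> nat \<Rightarrow> nat" where
  "qt_hop P k a b = (LEAST n. (qt_adj P k ^^ n) a b)"

definition qt_diameter :: "pt set \<Rightarrow> nat \<Rightarrow> nat" where
  "qt_diameter P k = Max {qt_hop P k a b | a b. qt_leaf P k a \<and> qt_leaf P k b}"

definition bbox_center :: "pt set \<Rightarrow> pt" where
  "bbox_center S = ((Min (fst ` S) + Max (fst ` S)) / 2, (Min (snd ` S) + Max (snd ` S)) / 2)"

definition is_leader :: "pt set \<Rightarrow> pt \<Rightarrow> bool" where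
  "is_leader S l \<longleftrightarrow> l \<in> S \<and> (\<forall>q\<in>S. dist l (bbox_center S) \<le> dist q (bbox_center S))"

definition well_separated :: "real \<Rightarrow> pt set \<Rightarrow> pt set \<Rightarrow> bool" where
  "well_separated s A B \<longleftrightarrow> (\<exists>cA cB r. r \<ge> 0 \<and> A \<subseteq> cball cA r \<and> B \<subseteq> cball cB r \<and>
      cball cA r \<inter> cball cB r = {} \<and> dist cA cB - 2 * r \<ge> s * r)"

definition is_wspd :: "pt set \<Rightarrow> real \<Rightarrow> (pt set \<times> pt set) set \<Rightarrow> bool" where
  "is_wspd L s W \<longleftrightarrow> finite W \<and>
     (\<forall>(A,B)\<in>W. A \<noteq> {} \<and> B \<noteq> {} \<and> A \<subseteq> L \<and> B \<subseteq> L \<and> well_separated s A B) \<and>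
     (\<forall>p\<in>L. \<forall>q\<in>L. p \<noteq> q \<longrightarrow>
        card {(A,B) \<in> W. (p \<in> A \<and> q \<in> B) \<or> (q \<in> A \<and> p \<in> B)} = 1)"

definition wspd_spanner :: "pt set \<Rightarrow> real \<Rightarrow> graph \<Rightarrow> bool" where
  "wspd_spanner L s E \<longleftrightarrow> (\<exists>W f. is_wspd L s W \<and>
     (\<forall>w\<in>W. fst (f w) \<in> fst w \<and> snd (f w) \<in> snd w) \<and>
     E = (\<lambda>w. {fst (f w), snd (f w)}) ` W)"

text \<open>One step of merging: process pair (u,v); state = (H, set of bridges).\<close>
definition merge_step :: "real \<Rightarrow> graph \<times> pt list set \<Rightarrow> pt \<times> pt \<Rightarrow> graph \<times> pt list set \<Rightarrow> bool" where
  "merge_step t st uv st' \<longleftrightarrow>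
     (let E = fst st; B = snd st; u = fst uv; v = snd uv in
      if (\<exists>br\<in>B. t * dist u (hd br) + path_len br + t * dist (last br) v \<le> t * dist u v)
      then st' = st
      else if has_tpath E t u v
      then (\<exists>ps. is_tpath E t ps u v \<and> st' = (E, insert ps B))
      else st' = (insert {u,v} E, insert [u,v] B))"

inductive merge_run :: "real \<Rightarrow> (pt \<times> pt) list \<Rightarrow> graph \<times> pt list set \<Rightarrow> graph \<times> pt list set \<Rightarrow> bool"
  for t where
  nil: "merge_run t [] st st"
| cons: "merge_step t st uv st1 \<Longrightarrow> merge_run t ps st1 st2 \<Longrightarrow> merge_run t (uv # ps) st st2"

definition merge_leaves :: "real \<Rightarrow> pt set \<Rightarrow> pt set \<Rightarrow> graph \<Rightarrow> graph \<Rightarrow> bool" where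
  "merge_leaves t Qi Qj E E' \<longleftrightarrow>
     (\<exists>ps B'. distinct ps \<and> set ps = Qi \<times> Qj \<and> merge_run t ps (E, {}) (E', B'))"

inductive merges_run :: "pt set \<Rightarrow> real \<Rightarrow> ((nat \<times> nat \<times> nat) \<times> (nat \<times> nat \<times> nat)) list \<Rightarrow> graph \<Rightarrow> graph \<Rightarrow> bool"
  for P t where
  nil: "merges_run P t [] E E"
| cons: "merge_leaves t (P \<inter> qsq P a) (P \<inter> qsq P b) E E1 \<Longrightarrow> merges_run P t ls E1 E2 \<Longrightarrow>
         merges_run P t ((a,b) # ls) E E2"

definition merge_schedule :: "pt set \<Rightarrow> nat \<Rightarrow> nat \<Rightarrow> ((nat \<times> nat \<times> nat) \<times> (nat \<times> nat \<times> nat)) list \<Rightarrow> bool" where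
  "merge_schedule P k h ls \<longleftrightarrow>
     distinct (map (\<lambda>(a,b). {a,b}) ls) \<and>
     set (map (\<lambda>(a,b). {a,b}) ls) =
        {{a,b} | a b. ne_leaf P k a \<and> ne_leaf P k b \<and> a \<noteq> b \<and> qt_hop P k a b \<le> h} \<and>
     (\<forall>(a,b) \<in> set ls. a \<noteq> b) \<and>
     sorted (map (\<lambda>(a,b). qt_hop P k a b) ls)"

section \<open>Fast-Sparse-Spanner: H is a possible output\<close>

definition fss_output :: "pt set \<Rightarrow> real \<Rightarrow> real \<Rightarrow> nat \<Rightarrow> nat \<Rightarrow> graph \<Rightarrow> bool" where
  "fss_output P t t' k h H \<longleftrightarrow>
     (\<exists>gs ld Ew ls.
        (\<forall>\<sigma>. ne_leaf P k \<sigma> \<longrightarrow> greedy_spanner (P \<inter> qsq P \<sigma>) t (gs \<sigma>)) \<and>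
        (\<forall>\<sigma>. ne_leaf P k \<sigma> \<longrightarrow> is_leader (P \<inter> qsq P \<sigma>) (ld \<sigma>)) \<and>
        wspd_spanner (ld ` {\<sigma>. ne_leaf P k \<sigma>}) (4 * (t' + 1) / (t' - 1)) Ew \<and>
        merge_schedule P k h ls \<and>
        merges_run P t ls ((\<Union>\<sigma>\<in>{\<sigma>. ne_leaf P k \<sigma>}. gs \<sigma>) \<union> Ew) H)"

end

theory Submission
  imports Defs
begin

text \<open>Inside every leaf the greedy t-spanner already provides t-paths, and it stays in H.
  Merging two leaves produces a t-path for every pair u, v across them: if a bridge
  x \<leadsto> y passes the skip test, a t-path u \<leadsto> x inside the first leaf, the bridge and a
  t-path y \<leadsto> v inside the second leaf add up to length at most t|uv|; otherwise a t-path is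
  found or the edge uv is added. With h the diameter of G_T every pair of non-empty leaves is
  merged, and every point lies in a non-empty leaf because cells deep enough contain at most
  one point.\<close>

lemma is_path_iff_successively:
  "is_path E ps u v \<longleftrightarrow> ps \<noteq> [] \<and> hd ps = u \<and> last ps = v \<and> successively (\<lambda>a b. {a, b} \<in> E) ps"
  unfolding is_path_def successively_conv_nth by (auto simp: less_diff_conv)

lemma path_len_Nil [simp]: "path_len [] = 0"
  and path_len_singleton [simp]: "path_len [a] = 0"
  and path_len_Cons_Cons [simp]: "path_len (a # b # ps) = dist a b + path_len (b # ps)"
  unfolding path_len_def by (simp_all del: sum.lessThan_Suc add: sum.lessThan_Suc_shift)

lemma path_len_append:
  "path_len (xs @ y # ys) = path_len (xs @ [y]) + path_len (y # ys)"
  by (induction xs rule: induct_list012) auto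

lemma path_len_rev: "path_len (rev ps) = path_len ps"
proof (induction ps rule: induct_list012)
  case (3 a b ps)
  have "path_len (rev (a # b # ps)) = path_len (rev (b # ps)) + dist b a"
    using path_len_append[of "rev ps" b "[a]"] by simp
  then show ?case using "3.IH"(2) by (simp add: dist_commute)
qed simp_all

lemma is_path_rev: "is_path E ps u v \<Longrightarrow> is_path E (rev ps) v u"
  by (auto simp: is_path_iff_successively hd_rev last_rev insert_commute)

lemma has_tpath_sym: "has_tpath E t u v \<Longrightarrow> has_tpath E t v u"
  unfolding has_tpath_def is_tpath_def
  by (metis is_path_rev path_len_rev dist_commute)

lemma is_path_append:
  assumes "is_path E ps u w" "is_path E qs w v"
  shows "is_path E (ps @ tl qs) u v" "path_len (ps @ tl qs) = path_len ps + path_len qs"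
proof -
  obtain ps' where ps: "ps = ps' @ [w]"
    using assms(1) unfolding is_path_def by (metis append_butlast_last_id)
  obtain qs' where qs: "qs = w # qs'"
    using assms(2) unfolding is_path_def by (metis list.collapse)
  show "is_path E (ps @ tl qs) u v"
    using assms unfolding is_path_iff_successively ps qs
    by (auto simp: successively_append_iff successively_Cons hd_append)
  show "path_len (ps @ tl qs) = path_len ps + path_len qs"
    using path_len_append[of ps' w qs'] by (simp add: ps qs)
qed

lemma is_path_mono: "is_path E ps u v \<Longrightarrow> E \<subseteq> E' \<Longrightarrow> is_path E' ps u v"
  unfolding is_path_def by blast

lemma has_tpath_mono: "has_tpath E t u v \<Longrightarrow> E \<subseteq> E' \<Longrightarrow> has_tpath E' t u v"
  unfolding has_tpath_def is_tpath_def using is_path_mono by blast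

lemma t_spanner_mono: "t_spanner S t E \<Longrightarrow> E \<subseteq> E' \<Longrightarrow> t_spanner S t E'"
  unfolding t_spanner_def using has_tpath_mono by blast

lemma has_tpath_refl: "has_tpath E t u u"
  unfolding has_tpath_def is_tpath_def is_path_def by (intro exI[of _ "[u]"]) simp

lemma is_tpath_edge: "t \<ge> 1 \<Longrightarrow> {u, v} \<in> E \<Longrightarrow> is_tpath E t [u, v] u v"
  unfolding is_tpath_def is_path_def using mult_right_mono[of 1 t "dist u v"] by simp

section \<open>Greedy spanners\<close>

lemma greedy_step_mono: "E \<subseteq> greedy_step t E pq"
  unfolding greedy_step_def by auto

lemma has_tpath_greedy_step:
  "t \<ge> 1 \<Longrightarrow> has_tpath (greedy_step t E (p, q)) t p q"
  unfolding greedy_step_def has_tpath_def using is_tpath_edge[of t p q "insert {p, q} E"] by auto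

lemma foldl_greedy_step_mono: "E \<subseteq> foldl (greedy_step t) E ps"
  by (induction ps arbitrary: E) (use greedy_step_mono in fastforce)+

lemma has_tpath_foldl_greedy_step:
  assumes "t \<ge> 1" "(p, q) \<in> set ps"
  shows "has_tpath (foldl (greedy_step t) E ps) t p q"
  using assms(2)
proof (induction ps arbitrary: E)
  case (Cons pq ps)
  then show ?case
    using has_tpath_mono[OF has_tpath_greedy_step[OF assms(1)] foldl_greedy_step_mono]
    by (cases "pq = (p, q)") auto
qed simp

lemma greedy_spanner_t_spanner:
  assumes "greedy_spanner S t G" "t \<ge> 1"
  shows "t_spanner S t G"
  unfolding t_spanner_def
proof (intro ballI)
  fix u w assume "u \<in> S" "w \<in> S"
  obtain ps where ps: "set (map (\<lambda>(p, q). {p, q}) ps) = {{p, q} | p q. p \<in> S \<and> q \<in> S \<and> p \<noteq> q}"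
    "G = foldl (greedy_step t) {} ps"
    using assms(1) unfolding greedy_spanner_def by blast
  show "has_tpath G t u w"
  proof (cases "u = w")
    case False
    then have "{u, w} \<in> set (map (\<lambda>(p, q). {p, q}) ps)" using ps(1) \<open>u \<in> S\<close> \<open>w \<in> S\<close> by blast
    then obtain p q where "(p, q) \<in> set ps" "{p, q} = {u, w}" by auto
    then show ?thesis
      using has_tpath_foldl_greedy_step[OF assms(2)] has_tpath_sym ps(2)
      by (metis doubleton_eq_iff)
  qed (simp add: has_tpath_refl)
qed

section \<open>Merging\<close>

definition bridges :: "graph \<Rightarrow> pt set \<Rightarrow> pt set \<Rightarrow> pt list set \<Rightarrow> bool" where
  "bridges E Qi Qj B \<longleftrightarrow> (\<forall>br\<in>B. is_path E br (hd br) (last br) \<and> hd br \<in> Qi \<and> last br \<in> Qj)"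

lemma bridges_mono: "bridges E Qi Qj B \<Longrightarrow> E \<subseteq> E' \<Longrightarrow> bridges E' Qi Qj B"
  unfolding bridges_def using is_path_mono by blast

lemma has_tpath_via_bridge:
  assumes "t_spanner Qi t E" "t_spanner Qj t E" "bridges E Qi Qj B" "br \<in> B"
    and "u \<in> Qi" "v \<in> Qj"
    and "t * dist u (hd br) + path_len br + t * dist (last br) v \<le> t * dist u v"
  shows "has_tpath E t u v"
proof -
  have br: "is_path E br (hd br) (last br)" "hd br \<in> Qi" "last br \<in> Qj"
    using assms(3,4) unfolding bridges_def by auto
  obtain p1 where p1: "is_path E p1 u (hd br)" "path_len p1 \<le> t * dist u (hd br)"
    using assms(1,5) br(2) unfolding t_spanner_def has_tpath_def is_tpath_def by blast
  obtain p2 where p2: "is_path E p2 (last br) v" "path_len p2 \<le> t * dist (last br) v"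
    using assms(2,6) br(3) unfolding t_spanner_def has_tpath_def is_tpath_def by blast
  note p1br = is_path_append[OF p1(1) br(1)]
  note p1brp2 = is_path_append[OF p1br(1) p2(1)]
  have "is_tpath E t ((p1 @ tl br) @ tl p2) u v"
    unfolding is_tpath_def using p1brp2 p1br(2) p1(2) p2(2) assms(7) by linarith
  then show ?thesis unfolding has_tpath_def by blast
qed

lemma merge_step_connects:
  assumes "merge_step t (E, B) (u, v) (E', B')"
    and "t_spanner Qi t E" "t_spanner Qj t E" "bridges E Qi Qj B"
    and "u \<in> Qi" "v \<in> Qj" "t \<ge> 1"
  shows "E \<subseteq> E'" "bridges E' Qi Qj B'" "has_tpath E' t u v"
proof -
  consider (skip) br where "br \<in> B"
      "t * dist u (hd br) + path_len br + t * dist (last br) v \<le> t * dist u v"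
      "E' = E" "B' = B"
    | (found) ps where "is_tpath E t ps u v" "E' = E" "B' = insert ps B"
    | (edge) "E' = insert {u, v} E" "B' = insert [u, v] B"
    using assms(1) unfolding merge_step_def Let_def by (auto split: if_splits)
  then have "E \<subseteq> E' \<and> bridges E' Qi Qj B' \<and> has_tpath E' t u v"
  proof cases
    case skip
    then show ?thesis
      using has_tpath_via_bridge[OF assms(2-4) _ assms(5,6)] assms(4) by auto
  next
    case (found ps)
    then show ?thesis
      using assms(4-6) unfolding bridges_def is_tpath_def is_path_def has_tpath_def by auto
  next
    case edge
    have "is_tpath E' t [u, v] u v" using is_tpath_edge[OF assms(7)] edge by simp
    then show ?thesis
      using edge bridges_mono[OF assms(4), of E'] assms(5,6)
      unfolding bridges_def is_tpath_def has_tpath_def by auto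
  qed
  then show "E \<subseteq> E'" "bridges E' Qi Qj B'" "has_tpath E' t u v" by auto
qed

lemma merge_run_connects:
  assumes "merge_run t ps st st'"
    and "t_spanner Qi t (fst st)" "t_spanner Qj t (fst st)" "bridges (fst st) Qi Qj (snd st)"
    and "set ps \<subseteq> Qi \<times> Qj" "t \<ge> 1"
  shows "fst st \<subseteq> fst st' \<and> (\<forall>(u, v)\<in>set ps. has_tpath (fst st') t u v)"
  using assms(1-5)
proof (induction rule: merge_run.induct)
  case (cons st uv st1 ps st2)
  obtain E B u v E1 B1 where eqs: "st = (E, B)" "uv = (u, v)" "st1 = (E1, B1)"
    by (metis surj_pair)
  note step = merge_step_connects[OF cons.hyps(1)[unfolded eqs]]
  have "E \<subseteq> E1" "bridges E1 Qi Qj B1" "has_tpath E1 t u v"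
    using step cons.prems eqs assms(6) by auto
  moreover have "t_spanner Qi t E1" "t_spanner Qj t E1"
    using t_spanner_mono \<open>E \<subseteq> E1\<close> cons.prems eqs by auto
  ultimately show ?case
    using cons.IH cons.prems(4) has_tpath_mono eqs by fastforce
qed simp

lemma merge_leaves_connects:
  assumes "merge_leaves t Qi Qj E E'" "t_spanner Qi t E" "t_spanner Qj t E" "t \<ge> 1"
  shows "E \<subseteq> E'" "\<forall>u\<in>Qi. \<forall>v\<in>Qj. has_tpath E' t u v"
proof -
  obtain ps B' where "set ps = Qi \<times> Qj" "merge_run t ps (E, {}) (E', B')"
    using assms(1) unfolding merge_leaves_def by blast
  then show "E \<subseteq> E'" "\<forall>u\<in>Qi. \<forall>v\<in>Qj. has_tpath E' t u v"
    using merge_run_connects[of t ps "(E, {})" "(E', B')" Qi Qj] assms(2-4)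
    by (auto simp: bridges_def)
qed

lemma merges_run_connects:
  assumes "merges_run P t ls E E'"
    and "\<forall>(a, b)\<in>set ls. t_spanner (P \<inter> qsq P a) t E \<and> t_spanner (P \<inter> qsq P b) t E"
    and "t \<ge> 1"
  shows "E \<subseteq> E' \<and> (\<forall>(a, b)\<in>set ls. \<forall>u\<in>P \<inter> qsq P a. \<forall>v\<in>P \<inter> qsq P b. has_tpath E' t u v)"
  using assms(1,2)
proof (induction rule: merges_run.induct)
  case (cons a b E E1 ls E2)
  have "E \<subseteq> E1" "\<forall>u\<in>P \<inter> qsq P a. \<forall>v\<in>P \<inter> qsq P b. has_tpath E1 t u v"
    using merge_leaves_connects[OF cons.hyps(1) _ _ assms(3)] cons.prems by auto
  moreover have "\<forall>(a, b)\<in>set ls. t_spanner (P \<inter> qsq P a) t E1 \<and> t_spanner (P \<inter> qsq P b) t E1"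
    using cons.prems t_spanner_mono[OF _ \<open>E \<subseteq> E1\<close>] by fastforce
  ultimately show ?case
    using cons.IH has_tpath_mono by fastforce
qed simp

section \<open>Quad-tree cells\<close>

text \<open>Index of the column (or row) containing z among the 2^d subintervals of [x0, x0 + s],
  found by bisection.\<close>
fun cell_coord :: "real \<Rightarrow> real \<Rightarrow> real \<Rightarrow> nat \<Rightarrow> nat" where
  "cell_coord x0 s z 0 = 0"
| "cell_coord x0 s z (Suc d) = 2 * cell_coord x0 s z d +
     (if x0 + real (2 * cell_coord x0 s z d + 1) * s / 2 ^ Suc d \<le> z then 1 else 0)"

lemma cell_coord_less: "cell_coord x0 s z d < 2 ^ d"
  by (induction d) auto

lemma cell_coord_div_power:
  "d' \<le> d \<Longrightarrow> cell_coord x0 s z d div 2 ^ (d - d') = cell_coord x0 s z d'"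
proof (induction d)
  case (Suc d)
  show ?case
  proof (cases "d' = Suc d")
    case False
    then have "d' \<le> d" "Suc d - d' = Suc (d - d')" using Suc.prems by auto
    then show ?thesis using Suc.IH by (simp add: div_mult2_eq)
  qed simp
qed simp

lemma cell_coord_bounds:
  assumes "x0 \<le> z" "z \<le> x0 + s"
  shows "x0 + real (cell_coord x0 s z d) * (s / 2 ^ d) \<le> z \<and>
    z \<le> x0 + real (cell_coord x0 s z d + 1) * (s / 2 ^ d)"
proof (induction d)
  case 0
  show ?case using assms by simp
next
  case (Suc d)
  define c h where "c = cell_coord x0 s z d" and "h = s / 2 ^ Suc d"
  have "s / 2 ^ d = 2 * h" unfolding h_def by simp
  then have IH: "x0 + real c * (2 * h) \<le> z" "z \<le> x0 + real (c + 1) * (2 * h)"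
    using Suc.IH unfolding c_def by auto
  have step: "cell_coord x0 s z (Suc d) =
      2 * c + (if x0 + (2 * real c + 1) * h \<le> z then 1 else 0)"
    unfolding c_def h_def by (simp add: ac_simps)
  show ?case unfolding step h_def[symmetric] using IH by (simp add: algebra_simps)
qed

definition point_cell :: "pt set \<Rightarrow> pt \<Rightarrow> nat \<Rightarrow> nat \<times> nat \<times> nat" where
  "point_cell P p d =
     (d, cell_coord (root_x P) (root_side P) (fst p) d, cell_coord (root_y P) (root_side P) (snd p) d)"

lemma root_square_bounds:
  assumes "finite P" "p \<in> P"
  shows "root_x P \<le> fst p" "fst p \<le> root_x P + root_side P"
    "root_y P \<le> snd p" "snd p \<le> root_y P + root_side P"
proof -
  have "Min (fst ` P) \<le> fst p" "fst p \<le> Max (fst ` P)"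
       "Min (snd ` P) \<le> snd p" "snd p \<le> Max (snd ` P)"
    using assms by auto
  then show "root_x P \<le> fst p" "fst p \<le> root_x P + root_side P"
    "root_y P \<le> snd p" "snd p \<le> root_y P + root_side P"
    unfolding root_x_def root_y_def root_side_def by linarith+
qed

lemma mem_point_cell:
  assumes "finite P" "p \<in> P"
  shows "p \<in> qsq P (point_cell P p d)"
  using cell_coord_bounds[OF root_square_bounds(1,2)[OF assms], of d]
    cell_coord_bounds[OF root_square_bounds(3,4)[OF assms], of d]
  unfolding point_cell_def qsq_def by (cases p) (simp add: mult.commute)

lemma mem_qsq_iff:
  "(x, y) \<in> qsq P (d, i, j) \<longleftrightarrow>
     root_x P + real i * root_side P / 2 ^ d \<le> x \<and>
     x \<le> root_x P + real i * root_side P / 2 ^ d + root_side P / 2 ^ d \<and>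
     root_y P + real j * root_side P / 2 ^ d \<le> y \<and>
     y \<le> root_y P + real j * root_side P / 2 ^ d + root_side P / 2 ^ d"
proof -
  have succ: "real (n + 1) * root_side P / 2 ^ d = real n * root_side P / 2 ^ d + root_side P / 2 ^ d"
    for n by (simp add: field_simps)
  show ?thesis unfolding qsq_def prod.case mem_Collect_eq succ by (simp only: add.assoc)
qed

lemma dist_le_cell_side:
  assumes "p \<in> qsq P (d, i, j)" "q \<in> qsq P (d, i, j)"
  shows "dist p q \<le> 2 * (root_side P / 2 ^ d)"
proof -
  obtain a b c e where p: "p = (a, b)" and q: "q = (c, e)" by (metis surj_pair)
  have "\<bar>a - c\<bar> \<le> root_side P / 2 ^ d" "\<bar>b - e\<bar> \<le> root_side P / 2 ^ d"
    using assms unfolding p q mem_qsq_iff by linarith+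
  then have "sqrt ((dist a c)\<^sup>2 + (dist b e)\<^sup>2) \<le> 2 * (root_side P / 2 ^ d)"
    using sqrt_sum_squares_le_sum_abs[of "dist a c" "dist b e"] unfolding dist_real_def by linarith
  then show ?thesis unfolding p q dist_Pair_Pair .
qed

lemma cells_eventually_card_le_1:
  assumes "finite P"
  obtains D where "\<And>d i j. d \<ge> D \<Longrightarrow> card (P \<inter> qsq P (d, i, j)) \<le> 1"
proof -
  define Q where "Q = {pq \<in> P \<times> P. fst pq \<noteq> snd pq}"
  have fin: "finite Q" unfolding Q_def using assms by simp
  have ev: "\<forall>pq\<in>Q. eventually (\<lambda>d. 2 * root_side P / 2 ^ d < dist (fst pq) (snd pq)) sequentially"
  proof
    fix pq assume "pq \<in> Q"
    then have "0 < dist (fst pq) (snd pq)" unfolding Q_def by simp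
    then show "eventually (\<lambda>d. 2 * root_side P / 2 ^ d < dist (fst pq) (snd pq)) sequentially"
      using order_tendstoD(2)[OF LIMSEQ_divide_realpow_zero[of "2::real" "2 * root_side P"]] by simp
  qed
  obtain D
    where D: "\<And>d. d \<ge> D \<Longrightarrow> \<forall>pq\<in>Q. 2 * root_side P / 2 ^ d < dist (fst pq) (snd pq)"
    using eventually_ball_finite[OF fin ev] unfolding eventually_sequentially by blast
  have "card (P \<inter> qsq P (d, i, j)) \<le> 1" if "d \<ge> D" for d i j
  proof -
    have "p = q" if "p \<in> P \<inter> qsq P (d, i, j)" "q \<in> P \<inter> qsq P (d, i, j)" for p q
    proof (rule ccontr)
      assume "p \<noteq> q"
      then have "(p, q) \<in> Q" unfolding Q_def using that by simp
      then have "2 * root_side P / 2 ^ d < dist p q" using D[OF \<open>d \<ge> D\<close>] by fastforce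
      moreover have "dist p q \<le> 2 * (root_side P / 2 ^ d)"
        using dist_le_cell_side that by blast
      ultimately show False by simp
    qed
    then show ?thesis using assms by (simp add: card_le_Suc0_iff_eq)
  qed
  then show thesis using that by blast
qed

lemma finite_qt_leaves:
  assumes "finite P" "k > 0"
  shows "finite {n. qt_leaf P k n}"
proof -
  obtain D where D: "\<And>d i j. d \<ge> D \<Longrightarrow> card (P \<inter> qsq P (d, i, j)) \<le> 1"
    using cells_eventually_card_le_1[OF assms(1)] by blast
  have "(d, i, j) \<in> {..D} \<times> {..<2^D} \<times> {..<2^D}" if "qt_leaf P k (d, i, j)" for d i j
  proof -
    have node: "qt_node P k (d, i, j)" using that unfolding qt_leaf_def by simp
    have "d \<le> D"
    proof (rule ccontr)
      assume "\<not> d \<le> D"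
      then have "k < card (P \<inter> qsq P (D, i div 2^(d-D), j div 2^(d-D)))"
        using node unfolding qt_node_def by auto
      then show False using D[of D "i div 2^(d-D)" "j div 2^(d-D)"] assms(2) by simp
    qed
    moreover have "i < 2^d" "j < 2^d" using node unfolding qt_node_def by auto
    moreover note less_le_trans[OF _ power_increasing[OF \<open>d \<le> D\<close>, of "2::nat"]]
    ultimately show ?thesis by simp
  qed
  then have "{n. qt_leaf P k n} \<subseteq> {..D} \<times> {..<2^D} \<times> {..<2^D}" by auto
  then show ?thesis by (rule finite_subset) auto
qed

text \<open>The leaf containing p is the shallowest cell of p holding at most k points: all its
  ancestors, being cells of p as well, hold more than k points.\<close>
lemma ex_ne_leaf_mem:
  assumes "finite P" "k > 0" "p \<in> P"
  obtains \<sigma> where "ne_leaf P k \<sigma>" "p \<in> qsq P \<sigma>"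
proof -
  obtain D where D: "\<And>d i j. d \<ge> D \<Longrightarrow> card (P \<inter> qsq P (d, i, j)) \<le> 1"
    using cells_eventually_card_le_1[OF assms(1)] by blast
  have "card (P \<inter> qsq P (point_cell P p D)) \<le> 1"
    unfolding point_cell_def by (rule D) simp
  then have ex: "card (P \<inter> qsq P (point_cell P p D)) \<le> k" using assms(2) by simp
  define d0 where "d0 = (LEAST d. card (P \<inter> qsq P (point_cell P p d)) \<le> k)"
  have d0: "card (P \<inter> qsq P (point_cell P p d0)) \<le> k"
    unfolding d0_def using LeastI[of "\<lambda>d. card (P \<inter> qsq P (point_cell P p d)) \<le> k", OF ex] .
  have below: "k < card (P \<inter> qsq P (point_cell P p d))" if "d < d0" for d
    using not_less_Least[OF that[unfolded d0_def]] by simp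
  have "qt_node P k (point_cell P p d0)"
    unfolding qt_node_def point_cell_def prod.case
  proof (intro conjI allI impI cell_coord_less)
    fix d assume "d < d0"
    then show "k < card (P \<inter> qsq P (d,
        cell_coord (root_x P) (root_side P) (fst p) d0 div 2 ^ (d0 - d),
        cell_coord (root_y P) (root_side P) (snd p) d0 div 2 ^ (d0 - d)))"
      using below[of d] unfolding point_cell_def by (simp add: cell_coord_div_power)
  qed
  moreover have "p \<in> qsq P (point_cell P p d0)" using mem_point_cell assms by blast
  ultimately show thesis
    using that d0 assms(3) unfolding ne_leaf_def qt_leaf_def by blast
qed

lemma qt_hop_le_qt_diameter:
  assumes "finite P" "k > 0" "qt_leaf P k a" "qt_leaf P k b"
  shows "qt_hop P k a b \<le> qt_diameter P k"
proof -
  have "{qt_hop P k a b | a b. qt_leaf P k a \<and> qt_leaf P k b} \<subseteq>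
      (\<lambda>(a, b). qt_hop P k a b) ` ({n. qt_leaf P k n} \<times> {n. qt_leaf P k n})" by auto
  then have "finite {qt_hop P k a b | a b. qt_leaf P k a \<and> qt_leaf P k b}"
    using finite_qt_leaves[OF assms(1,2)] finite_subset by blast
  then show ?thesis unfolding qt_diameter_def using assms(3,4) by (blast intro: Max_ge)
qed

lemma merge_schedule_ne_leaf:
  assumes "merge_schedule P k h ls" "(a, b) \<in> set ls"
  shows "ne_leaf P k a \<and> ne_leaf P k b"
proof -
  have "{a, b} \<in> set (map (\<lambda>(a, b). {a, b}) ls)" using assms(2) by force
  then obtain a' b' where "{a, b} = {a', b'}" "ne_leaf P k a'" "ne_leaf P k b'"
    using assms(1) unfolding merge_schedule_def by auto
  then show ?thesis by (metis doubleton_eq_iff)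
qed

lemma merge_schedule_covers:
  assumes "merge_schedule P k h ls" "ne_leaf P k a" "ne_leaf P k b" "a \<noteq> b"
    and "qt_hop P k a b \<le> h"
  shows "(a, b) \<in> set ls \<or> (b, a) \<in> set ls"
proof -
  have "{a, b} \<in> set (map (\<lambda>(a, b). {a, b}) ls)"
    using assms unfolding merge_schedule_def by blast
  then obtain a' b' where "(a', b') \<in> set ls" "{a', b'} = {a, b}" by auto
  then show ?thesis by (metis doubleton_eq_iff)
qed

lemma t_spanner_if_scheduled_leaves_connected:
  assumes "finite P" "k > 0" "merge_schedule P k (qt_diameter P k) ls"
    and leaf: "\<And>\<sigma>. ne_leaf P k \<sigma> \<Longrightarrow> t_spanner (P \<inter> qsq P \<sigma>) t H"
    and merged: "\<forall>(a, b)\<in>set ls. \<forall>u\<in>P \<inter> qsq P a. \<forall>v\<in>P \<inter> qsq P b. has_tpath H t u v"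
  shows "t_spanner P t H"
  unfolding t_spanner_def
proof (intro ballI)
  fix p q assume "p \<in> P" "q \<in> P"
  obtain a b where a: "ne_leaf P k a" "p \<in> qsq P a" and b: "ne_leaf P k b" "q \<in> qsq P b"
    using ex_ne_leaf_mem[OF assms(1,2)] \<open>p \<in> P\<close> \<open>q \<in> P\<close> by metis
  consider "a = b" | "(a, b) \<in> set ls" | "(b, a) \<in> set ls"
    using merge_schedule_covers[OF assms(3) a(1) b(1)] qt_hop_le_qt_diameter[OF assms(1,2)] a(1) b(1)
    unfolding ne_leaf_def by blast
  then show "has_tpath H t p q"
  proof cases
    case 1
    then show ?thesis using leaf[OF a(1)] \<open>p \<in> P\<close> \<open>q \<in> P\<close> a(2) b(2) unfolding t_spanner_def by blast
  next
    case 2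
    then show ?thesis using merged \<open>p \<in> P\<close> \<open>q \<in> P\<close> a(2) b(2) by blast
  next
    case 3
    then show ?thesis using merged \<open>p \<in> P\<close> \<open>q \<in> P\<close> a(2) b(2) has_tpath_sym by blast
  qed
qed

theorem theorem3:
  fixes P :: "pt set" and t t' :: real and k :: nat and H :: graph
  assumes "finite P" and "t > 1" and "t' \<ge> t" and "k > 0"
    and "fss_output P t t' k (qt_diameter P k) H"
  shows "t_spanner P t H"
proof -
  have t: "t \<ge> 1" using assms(2) by simp
  obtain gs ld Ew ls where
    gs: "\<And>\<sigma>. ne_leaf P k \<sigma> \<Longrightarrow> greedy_spanner (P \<inter> qsq P \<sigma>) t (gs \<sigma>)" and
    sch: "merge_schedule P k (qt_diameter P k) ls" and
    run: "merges_run P t ls ((\<Union>\<sigma>\<in>{\<sigma>. ne_leaf P k \<sigma>}. gs \<sigma>) \<union> Ew) H"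
    using assms(5) unfolding fss_output_def by blast
  define G0 where "G0 = (\<Union>\<sigma>\<in>{\<sigma>. ne_leaf P k \<sigma>}. gs \<sigma>) \<union> Ew"
  have leaf: "t_spanner (P \<inter> qsq P \<sigma>) t G0" if "ne_leaf P k \<sigma>" for \<sigma>
  proof (rule t_spanner_mono)
    show "t_spanner (P \<inter> qsq P \<sigma>) t (gs \<sigma>)" using greedy_spanner_t_spanner[OF gs[OF that] t] .
    show "gs \<sigma> \<subseteq> G0" unfolding G0_def using that by blast
  qed
  have "\<forall>(a, b)\<in>set ls. t_spanner (P \<inter> qsq P a) t G0 \<and> t_spanner (P \<inter> qsq P b) t G0"
    using leaf merge_schedule_ne_leaf[OF sch] by blast
  then have "G0 \<subseteq> H"
    and merged: "\<forall>(a, b)\<in>set ls. \<forall>u\<in>P \<inter> qsq P a. \<forall>v\<in>P \<inter> qsq P b. has_tpath H t u v"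
    using merges_run_connects[OF run[folded G0_def] _ t] by blast+
  show ?thesis
    using t_spanner_if_scheduled_leaves_connected[OF assms(1,4) sch _ merged]
      t_spanner_mono[OF leaf \<open>G0 \<subseteq> H\<close>] by blast
qed

end
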